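(* Let $t$ be a positive even integer. Then $$\sum_{n\geq1} a_t^{\star}(n)\, q^n=t \cdot \frac{q^{2t}\, (-q;q^2)_{\infty}}{1-q^{2t}},$$ and consequently, for every integer $n\ge 1$, $$a_t^{\star}(n)=t\sum_{j\geq 1} sc(n-2tj)=t\sum_{j\geq 1} q^{\star}(n-2tj).$$
   Context: A partition $\lambda=(\lambda_1\ge\dots\ge\lambda_\ell\ge 1)$ of $n$ has $\sum_i\lambda_i=n$; its Young diagram has $\lambda_i$ left-justified cells in row $i$. The conjugate $\lambda'$ is obtained by reflecting the Young diagram in the main diagonal; $\lambda$ is self-conjugate if $\lambda=\lambda'$, and $\mathcal{SC}$ is the set of self-conjugate partitions. The hook length of the cell $(i,j)$ is the number of cells to its right in row $i$ plus the number below it in column $j$ plus $1$; $n_t(\lambda)$ is the number of cells of $\lambda$ with hook length $t$. Define $a_t^{\star}(n)=\sum_{\lambda\in\mathcal{SC},\,\lambda\vdash n} n_t(\lambda)$. $sc(m)$ is the number of self-conjugate partitions of $m$, $q^{\star}(m)$ is the number of partitions of $m$ into distinct odd parts, with $sc(0)=q^\star(0)=1$ and $sc(m)=q^\star(m)=0$ for $m<0$. $(a;q)_\infty=\prod_{j\ge0}(1-aq^j)$. *)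

theory Defs
  imports "HOL-Analysis.Analysis"
begin

text \<open>A partition is a weakly decreasing list of positive integers
  (\<lambda>_1 \<ge> \<lambda>_2 \<ge> ... \<ge> \<lambda>_l \<ge> 1). Rows and columns are 0-indexed here.\<close>

definition is_partition :: "nat list \<Rightarrow> bool" where
  "is_partition lam \<longleftrightarrow> sorted_wrt (\<ge>) lam \<and> (\<forall>p\<in>set lam. 0 < p)"

definition partitions_of :: "nat \<Rightarrow> nat list set" where
  "partitions_of n = {lam. is_partition lam \<and> sum_list lam = n}"

definition conj_part :: "nat list \<Rightarrow> nat list" where
  "conj_part lam = map (\<lambda>j. length (filter (\<lambda>p. j < p) lam))
      [0..<(if lam = [] then 0 else hd lam)]"

definition self_conjugate :: "nat list \<Rightarrow> bool" where
  "self_conjugate lam \<longleftrightarrow> conj_part lam = lam"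

definition cells :: "nat list \<Rightarrow> (nat \<times> nat) set" where
  "cells lam = {(i, j). i < length lam \<and> j < lam ! i}"

definition hook :: "nat list \<Rightarrow> nat \<times> nat \<Rightarrow> nat" where
  "hook lam c = (case c of (i, j) \<Rightarrow>
      (lam ! i - j - 1) + (conj_part lam ! j - i - 1) + 1)"

definition n_hook :: "nat \<Rightarrow> nat list \<Rightarrow> nat" where
  "n_hook t lam = card {c \<in> cells lam. hook lam c = t}"

definition a_star :: "nat \<Rightarrow> nat \<Rightarrow> nat" where
  "a_star t n = (\<Sum>lam \<in> {lam \<in> partitions_of n. self_conjugate lam}. n_hook t lam)"

definition sc :: "int \<Rightarrow> nat" where
  "sc m = (if m < 0 then 0 else card {lam \<in> partitions_of (nat m). self_conjugate lam})"

definition q_star :: "int \<Rightarrow> nat" where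
  "q_star m = (if m < 0 then 0 else
     card {lam \<in> partitions_of (nat m). sorted_wrt (>) lam \<and> (\<forall>p\<in>set lam. odd p)})"

end

theory Submission
  imports Defs "HOL-Library.More_List"
begin

text \<open>A partition \<open>\<lambda>\<close> is encoded by its Maya diagram \<open>{\<lambda>\<^sub>i - i - 1 | i \<ge> 0} \<subseteq> \<int>\<close>
  (0-indexed rows, \<open>\<lambda>\<^sub>i = 0\<close> beyond the length). Hooks of length \<open>t\<close> are the beads \<open>y\<close> whose
  position \<open>y - t\<close> is empty, and conjugation maps the diagram to the complement of its
  reflection \<open>y \<mapsto> -y-1\<close>. So a self-conjugate \<open>\<lambda>\<close> is determined by the nonnegative part
  \<open>D\<close> of its diagram, and \<open>{2y + 1 | y \<in> D}\<close> are its diagonal hooks: a partition of \<open>|\<lambda>|\<close> into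
  distinct odd parts, whence \<open>sc = q\<^sup>\<star>\<close>.

  Sliding the bead of a \<open>t\<close>-hook down by \<open>t\<close> together with its mirror image (kept apart
  because \<open>t\<close> is even) lowers the size by \<open>2t\<close>. This matches the \<open>t\<close>-hooks of self-conjugate
  partitions of \<open>n\<close> with the beads that can move up by \<open>t\<close> in self-conjugate partitions of
  \<open>n - 2t\<close>, and every diagram has exactly \<open>t\<close> more of the latter than \<open>t\<close>-hooks. Hence
  \<open>a\<^sup>\<star>\<^sub>t(n) = a\<^sup>\<star>\<^sub>t(n - 2t) + t sc(n - 2t)\<close>; iterating gives the formula for \<open>a\<^sup>\<star>\<^sub>t(n)\<close>, and the
  generating function follows from \<open>\<Sum>\<^sub>n sc(n) q^n = \<Prod>\<^sub>j (1 + q^(2j+1))\<close>.\<close>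

section \<open>Maya diagrams\<close>

definition partition_fun :: "(nat \<Rightarrow> nat) \<Rightarrow> nat \<Rightarrow> bool" where
  "partition_fun f L \<longleftrightarrow> antimono f \<and> (\<forall>i\<ge>L. f i = 0)"

definition conj_fun :: "(nat \<Rightarrow> nat) \<Rightarrow> nat \<Rightarrow> nat" where
  "conj_fun f j = card {i. j < f i}"

definition beta :: "(nat \<Rightarrow> nat) \<Rightarrow> nat \<Rightarrow> int" where
  "beta f i = int (f i) - int i - 1"

definition maya :: "(nat \<Rightarrow> nat) \<Rightarrow> int set" where
  "maya f = range (beta f)"

lemma partition_funD:
  assumes "partition_fun f L"
  shows "i \<le> j \<Longrightarrow> f j \<le> f i" and "L \<le> i \<Longrightarrow> f i = 0"
  using assms unfolding partition_fun_def by (auto dest: antimonoD)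

lemma downward_closed_eq_lessThan:
  assumes closed: "\<And>i j. i \<le> j \<Longrightarrow> P j \<Longrightarrow> P i" and fin: "finite {i::nat. P i}"
  shows "{i. P i} = {..<card {i. P i}}"
proof -
  have ex: "\<exists>i. \<not> P i"
    using fin by (metis finite_nat_set_iff_bounded mem_Collect_eq order_less_irrefl)
  define k where "k = (LEAST i. \<not> P i)"
  have "\<not> P k" unfolding k_def using ex by (rule LeastI_ex)
  then have "{i. P i} = {..<k}"
    using closed not_less_Least[of _ "\<lambda>i. \<not> P i"] unfolding k_def
    by (metis lessThan_iff mem_Collect_eq not_le subsetI subset_antisym)
  then show ?thesis by simp
qed

lemma partition_fun_finite_support:
  assumes "partition_fun f L" shows "finite {i. j < f i}"
proof -
  have "i < L" if "j < f i" for i using partition_funD(2)[OF assms, of i] that by (cases "L \<le> i") auto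
  then have "{i. j < f i} \<subseteq> {..<L}" by blast
  then show ?thesis using finite_subset by blast
qed

lemma less_conj_fun_iff:
  assumes "partition_fun f L" shows "j < f i \<longleftrightarrow> i < conj_fun f j"
proof -
  have "{i. j < f i} = {..<conj_fun f j}" unfolding conj_fun_def
    using partition_funD(1)[OF assms] partition_fun_finite_support[OF assms]
    by (intro downward_closed_eq_lessThan) (auto intro: less_le_trans)
  then show ?thesis by (metis lessThan_iff mem_Collect_eq)
qed

lemma partition_fun_conj_fun:
  assumes "partition_fun f L" shows "partition_fun (conj_fun f) (f 0)"
  unfolding partition_fun_def
proof safe
  show "antimono (conj_fun f)"
  proof
    fix i j :: nat assume "i \<le> j"
    then have "{k. j < f k} \<subseteq> {k. i < f k}" by auto
    then show "conj_fun f j \<le> conj_fun f i"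
      unfolding conj_fun_def by (intro card_mono partition_fun_finite_support[OF assms])
  qed
next
  fix i assume "f 0 \<le> i"
  then have "f k \<le> i" for k using partition_funD(1)[OF assms, of 0 k] by simp
  then have "{k. i < f k} = {}" by (auto simp: not_less[symmetric])
  then show "conj_fun f i = 0" unfolding conj_fun_def by simp
qed

lemma conj_fun_0_le:
  assumes "partition_fun f L" shows "conj_fun f 0 \<le> L"
proof -
  have "i < L" if "0 < f i" for i using partition_funD(2)[OF assms, of i] that by (cases "L \<le> i") auto
  then have "{i. 0 < f i} \<subseteq> {..<L}" by blast
  then show ?thesis unfolding conj_fun_def by (metis card_lessThan card_mono finite_lessThan)
qed

lemma beta_strict_antimono: "partition_fun f L \<Longrightarrow> i < j \<Longrightarrow> beta f j < beta f i"
  using partition_funD(1)[of f L i j] unfolding beta_def by simp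

lemma inj_beta: "partition_fun f L \<Longrightarrow> inj (beta f)"
  by (metis beta_strict_antimono injI less_irrefl nat_neq_iff)

lemma beta_less: "partition_fun f L \<Longrightarrow> beta f i < int (f 0)"
  using partition_funD(1)[of f L 0 i] unfolding beta_def by simp

lemma beta_beyond: "partition_fun f L \<Longrightarrow> L \<le> i \<Longrightarrow> beta f i = - int i - 1"
  using partition_funD(2) unfolding beta_def by simp

lemma maya_below: "partition_fun f L \<Longrightarrow> y \<le> - int L - 1 \<Longrightarrow> y \<in> maya f"
  unfolding maya_def by (rule image_eqI[where x = "nat (- y - 1)"]) (auto simp: beta_beyond)

lemma maya_above: "partition_fun f L \<Longrightarrow> int (f 0) \<le> y \<Longrightarrow> y \<notin> maya f"
  unfolding maya_def using beta_less by (metis not_le rangeE)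

lemma beta_conj_fun_ne:
  assumes "partition_fun f L" shows "beta (conj_fun f) j \<noteq> - beta f i - 1"
  using less_conj_fun_iff[OF assms, of j i] unfolding beta_def by auto

lemma maya_window:
  assumes "partition_fun f L" and "L \<le> N" and "f 0 \<le> N"
  shows "maya f \<inter> {- int N..<int N} = beta f ` {..<N}"
proof (rule set_eqI, rule iffI)
  fix y assume "y \<in> maya f \<inter> {- int N..<int N}"
  then obtain i where y: "y = beta f i" "- int N \<le> y" unfolding maya_def by auto
  have "i < N"
  proof (rule ccontr)
    assume "\<not> i < N"
    then show False using y beta_beyond[OF assms(1), of i] assms(2) by simp
  qed
  then show "y \<in> beta f ` {..<N}" using y by auto
next
  fix y assume "y \<in> beta f ` {..<N}"
  then obtain i where "i < N" "y = beta f i" by auto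
  then show "y \<in> maya f \<inter> {- int N..<int N}"
    using beta_less[OF assms(1), of i] assms(3) unfolding maya_def beta_def by auto
qed

lemma card_maya_window:
  assumes "partition_fun f L" and "L \<le> N" and "f 0 \<le> N"
  shows "card (maya f \<inter> {- int N..<int N}) = N"
  using maya_window[OF assms] card_image[OF inj_on_subset[OF inj_beta[OF assms(1)]]] by simp

lemma maya_conj_fun_window:
  assumes f: "partition_fun f L" and N: "N = L + f 0" and y: "y \<in> {- int N..<int N}"
  shows "y \<in> maya (conj_fun f) \<longleftrightarrow> - y - 1 \<notin> maya f"
proof -
  define W where "W = {- int N..<int N}"
  define A where "A = maya (conj_fun f) \<inter> W"
  define B where "B = (\<lambda>y. - y - 1) ` (maya f \<inter> W)"
  have "card A = N" unfolding A_def W_def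
    using conj_fun_0_le[OF f] N by (intro card_maya_window[OF partition_fun_conj_fun[OF f]]) auto
  moreover have "card B = N" unfolding B_def W_def
    using card_maya_window[OF f, of N] N by (subst card_image) (auto intro: inj_onI)
  moreover have disj: "A \<inter> B = {}"
    using beta_conj_fun_ne[OF f] unfolding A_def B_def maya_def by (auto simp: eq_commute)
  moreover have "A \<subseteq> W" "B \<subseteq> W" "finite W" "card W = 2 * N" unfolding A_def B_def W_def by auto
  moreover have "finite A" "finite B" using calculation finite_subset by blast+
  ultimately have "A \<union> B = W" by (intro card_subset_eq) (auto simp: card_Un_disjoint)
  moreover have "y \<in> B \<longleftrightarrow> - y - 1 \<in> maya f"
    using y unfolding B_def W_def by (auto intro: rev_image_eqI[where x = "- y - 1"])
  ultimately show ?thesis using disj y unfolding A_def W_def by blast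
qed

lemma maya_conj_fun:
  assumes f: "partition_fun f L" shows "y \<in> maya (conj_fun f) \<longleftrightarrow> - y - 1 \<notin> maya f"
proof -
  define N where "N = L + f 0"
  have g: "partition_fun (conj_fun f) (f 0)" by (rule partition_fun_conj_fun[OF f])
  consider "y < - int N" | "y \<in> {- int N..<int N}" | "int N \<le> y" by fastforce
  then show ?thesis
  proof cases
    case 1
    then show ?thesis using maya_below[OF g, of y] maya_above[OF f, of "- y - 1"] N_def by simp
  next
    case 2
    then show ?thesis by (rule maya_conj_fun_window[OF f N_def])
  next
    case 3
    then show ?thesis
      using maya_above[OF g, of y] maya_below[OF f, of "- y - 1"] conj_fun_0_le[OF f] N_def by simp
  qed
qed

lemma maya_inj_aux:
  assumes f: "partition_fun f L" and g: "partition_fun g L'" and eq: "maya f = maya g"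
    and less: "beta f i < beta g i" and agree: "\<And>k. k < i \<Longrightarrow> beta f k = beta g k"
  shows False
proof -
  obtain k where k: "beta f k = beta g i" using eq unfolding maya_def by (metis rangeE rangeI)
  show False
  proof (cases "k < i")
    case True
    then show False using agree k beta_strict_antimono[OF g True] by simp
  next
    case False
    then have "beta f k \<le> beta f i" using beta_strict_antimono[OF f] by (metis le_less not_less)
    then show False using k less by simp
  qed
qed

lemma maya_inj:
  assumes f: "partition_fun f L" and g: "partition_fun g L'" and eq: "maya f = maya g"
  shows "f = g"
proof -
  have "beta f = beta g"
  proof (rule ccontr)
    assume "beta f \<noteq> beta g"
    then have ex: "\<exists>i. beta f i \<noteq> beta g i" by auto
    define i where "i = (LEAST i. beta f i \<noteq> beta g i)"
    have "beta f i \<noteq> beta g i" unfolding i_def using ex by (rule LeastI_ex)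
    moreover have "\<And>k. k < i \<Longrightarrow> beta f k = beta g k" unfolding i_def using not_less_Least by blast
    ultimately show False
      using maya_inj_aux[OF f g eq, of i] maya_inj_aux[OF g f eq[symmetric], of i]
      by (metis linorder_neqE)
  qed
  then show ?thesis by (auto simp: beta_def fun_eq_iff dest: fun_cong)
qed

section \<open>Partitions as lists and their hooks\<close>

lemma nth_default_pos_iff: "is_partition lam \<Longrightarrow> 0 < nth_default 0 lam i \<longleftrightarrow> i < length lam"
  unfolding is_partition_def nth_default_def by auto

lemma partition_fun_nth_default:
  assumes "is_partition lam" shows "partition_fun (nth_default 0 lam) (length lam)"
proof -
  have "lam ! j \<le> lam ! i" if "i \<le> j" "j < length lam" for i j
    using assms that unfolding is_partition_def
    by (metis le_eq_less_or_eq order_refl sorted_wrt_iff_nth_less)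
  then show ?thesis by (auto intro!: antimonoI simp: partition_fun_def nth_default_def)
qed

lemma length_conj_part: "length (conj_part lam) = nth_default 0 lam 0"
  unfolding conj_part_def nth_default_def by (cases lam) auto

lemma nth_default_conj_part:
  assumes "is_partition lam"
  shows "nth_default 0 (conj_part lam) = conj_fun (nth_default 0 lam)"
proof
  fix j
  show "nth_default 0 (conj_part lam) j = conj_fun (nth_default 0 lam) j"
  proof (cases "j < length (conj_part lam)")
    case True
    then have "nth_default 0 (conj_part lam) j = length (filter (\<lambda>p. j < p) lam)"
      unfolding conj_part_def nth_default_def by simp
    also have "\<dots> = card {i. i < length lam \<and> j < lam ! i}" by (rule length_filter_conv_card)
    also have "{i. i < length lam \<and> j < lam ! i} = {i. j < nth_default 0 lam i}"
      unfolding nth_default_def by auto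
    finally show ?thesis unfolding conj_fun_def .
  next
    case False
    then show ?thesis
      using partition_funD(2)[OF partition_fun_conj_fun[OF partition_fun_nth_default[OF assms]]]
      by (simp add: length_conj_part nth_default_beyond)
  qed
qed

lemma is_partition_conj_part:
  assumes "is_partition lam" shows "is_partition (conj_part lam)"
proof -
  let ?f = "nth_default 0 lam"
  have f: "partition_fun ?f (length lam)" by (rule partition_fun_nth_default[OF assms])
  have nth: "conj_part lam ! j = conj_fun ?f j" if "j < length (conj_part lam)" for j
    using nth_default_conj_part[OF assms] that by (metis nth_default_nth)
  have "sorted_wrt (\<ge>) (conj_part lam)"
    unfolding sorted_wrt_iff_nth_less
    using nth partition_funD(1)[OF partition_fun_conj_fun[OF f]] by (simp add: less_imp_le)
  moreover have "0 < conj_part lam ! j" if "j < length (conj_part lam)" for j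
    using nth[OF that] less_conj_fun_iff[OF f, of j 0] that by (simp add: length_conj_part)
  ultimately show ?thesis unfolding is_partition_def by (metis in_set_conv_nth)
qed

lemma partition_eqI:
  assumes lam: "is_partition lam" and mu: "is_partition mu"
    and eq: "nth_default 0 lam = nth_default 0 mu"
  shows "lam = mu"
proof -
  have "i < length lam \<longleftrightarrow> i < length mu" for i
    using nth_default_pos_iff[OF lam, of i] nth_default_pos_iff[OF mu, of i] eq by simp
  then have len: "length lam = length mu" by (meson less_irrefl_nat nat_neq_iff)
  show ?thesis
  proof (rule nth_equalityI[OF len])
    fix i assume "i < length lam"
    then show "lam ! i = mu ! i" using len eq by (metis nth_default_nth)
  qed
qed

lemma self_conjugate_iff_conj_fun:
  "is_partition lam \<Longrightarrow> self_conjugate lam \<longleftrightarrow> conj_fun (nth_default 0 lam) = nth_default 0 lam"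
  unfolding self_conjugate_def
  by (metis is_partition_conj_part nth_default_conj_part partition_eqI)

lemma sum_list_eq_sum_nth_default:
  assumes "length lam \<le> N" shows "sum_list lam = (\<Sum>i<N. nth_default 0 lam i)"
proof -
  have "sum_list lam = (\<Sum>i<length lam. nth_default 0 lam i)"
    by (simp add: sum_list_sum_nth atLeast0LessThan nth_default_nth)
  also have "\<dots> = (\<Sum>i<N. nth_default 0 lam i)"
    by (rule sum.mono_neutral_left) (use assms in \<open>auto simp: nth_default_beyond\<close>)
  finally show ?thesis .
qed

lemma partition_fun_imp_partition:
  assumes f: "partition_fun f L" shows "\<exists>lam. is_partition lam \<and> nth_default 0 lam = f"
proof -
  define k where "k = card {i. 0 < f i}"
  have pos_iff: "0 < f i \<longleftrightarrow> i < k" for i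
    using downward_closed_eq_lessThan[of "\<lambda>i. 0 < f i"] partition_funD(1)[OF f]
      partition_fun_finite_support[OF f, of 0]
    unfolding k_def by (metis (no_types, lifting) gr0I le_0_eq lessThan_iff mem_Collect_eq)
  define lam where "lam = map f [0..<k]"
  have "is_partition lam"
    unfolding is_partition_def lam_def sorted_wrt_iff_nth_less
    using partition_funD(1)[OF f] pos_iff by (auto simp: less_imp_le)
  moreover have "nth_default 0 lam = f"
    using pos_iff by (auto simp: lam_def nth_default_def fun_eq_iff)
  ultimately show ?thesis by blast
qed

definition down_moves :: "nat \<Rightarrow> int set \<Rightarrow> int set" where
  "down_moves t B = {y \<in> B. y - int t \<notin> B}"

lemma hook_in_row:
  assumes lam: "is_partition lam" and j: "j < nth_default 0 lam i"
  shows "hook lam (i, j) = t \<longleftrightarrow>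
           beta (conj_fun (nth_default 0 lam)) j = - (beta (nth_default 0 lam) i - int t) - 1"
proof -
  let ?f = "nth_default 0 lam"
  have f: "partition_fun ?f (length lam)" by (rule partition_fun_nth_default[OF lam])
  have "i < length lam" using j nth_default_pos_iff[OF lam] by (metis gr_zeroI not_less0)
  then have row: "lam ! i = ?f i" by (simp add: nth_default_nth)
  have "j < length (conj_part lam)"
    using j partition_funD(1)[OF f, of 0 i] by (simp add: length_conj_part)
  then have col: "conj_part lam ! j = conj_fun ?f j"
    using nth_default_nth[of j "conj_part lam" 0] by (simp add: nth_default_conj_part[OF lam])
  have "i < conj_fun ?f j" using less_conj_fun_iff[OF f] j by simp
  then have "hook lam (i, j) = ?f i + conj_fun ?f j - i - j - 1"
    using j by (simp add: hook_def row col)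
  then have "int (hook lam (i, j)) = int (?f i) + int (conj_fun ?f j) - int i - int j - 1"
    using j \<open>i < conj_fun ?f j\<close> by simp
  then show ?thesis unfolding beta_def by linarith
qed

lemma card_hooks_in_row:
  assumes lam: "is_partition lam"
  shows "card {j. j < nth_default 0 lam i \<and> hook lam (i, j) = t}
         = (if beta (nth_default 0 lam) i - int t \<in> maya (nth_default 0 lam) then 0 else 1)"
proof -
  let ?f = "nth_default 0 lam" and ?g = "beta (conj_fun (nth_default 0 lam))"
  define z where "z = - (beta ?f i - int t) - 1"
  have f: "partition_fun ?f (length lam)" by (rule partition_fun_nth_default[OF lam])
  have "j < ?f i" if "?g j = z" for j
    using that less_conj_fun_iff[OF f, of j i] unfolding z_def beta_def by auto
  then have "j < ?f i \<and> hook lam (i, j) = t \<longleftrightarrow> ?g j = z" for j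
    using hook_in_row[OF lam, of j i t] unfolding z_def by blast
  then have "{j. j < ?f i \<and> hook lam (i, j) = t} = ?g -` {z}" by auto
  also have "card (?g -` {z}) = (if z \<in> maya (conj_fun ?f) then 1 else 0)"
  proof (cases "z \<in> maya (conj_fun ?f)")
    case False
    then have "?g -` {z} = {}" unfolding maya_def by auto
    then show ?thesis using False by simp
  qed (use inj_beta[OF partition_fun_conj_fun[OF f]] in \<open>auto simp: maya_def card_vimage_inj\<close>)
  also have "z \<in> maya (conj_fun ?f) \<longleftrightarrow> beta ?f i - int t \<notin> maya ?f"
    using maya_conj_fun[OF f, of z] unfolding z_def by simp
  finally show ?thesis by simp
qed

lemma n_hook_eq_card_down_moves:
  assumes lam: "is_partition lam"
  shows "n_hook t lam = card (down_moves t (maya (nth_default 0 lam)))"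
proof -
  let ?f = "nth_default 0 lam"
  have f: "partition_fun ?f (length lam)" by (rule partition_fun_nth_default[OF lam])
  let ?I = "{i. beta ?f i - int t \<notin> maya ?f}"
  have "{c \<in> cells lam. hook lam c = t} = Sigma {..<length lam} (\<lambda>i. {j. j < ?f i \<and> hook lam (i, j) = t})"
    using nth_default_pos_iff[OF lam] unfolding cells_def by (force simp: nth_default_nth)
  then have "n_hook t lam = (\<Sum>i<length lam. card {j. j < ?f i \<and> hook lam (i, j) = t})"
    unfolding n_hook_def by (simp add: card_SigmaI)
  also have "\<dots> = card (?I \<inter> {..<length lam})"
    by (simp add: card_hooks_in_row[OF lam] sum.If_cases Int_commute Collect_neg_eq)
  also have "?I \<inter> {..<length lam} = ?I"
  proof -
    have "i < length lam" if "i \<in> ?I" for i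
    proof (rule ccontr)
      assume "\<not> i < length lam"
      then have "beta ?f i - int t = beta ?f (i + t)" using beta_beyond[OF f] by simp
      then show False using that unfolding maya_def by auto
    qed
    then show ?thesis by blast
  qed
  also have "card ?I = card (beta ?f ` ?I)"
    by (rule card_image[symmetric]) (rule inj_on_subset[OF inj_beta[OF f]], simp)
  also have "beta ?f ` ?I = down_moves t (maya ?f)"
    unfolding down_moves_def maya_def by blast
  finally show ?thesis .
qed

section \<open>Self-conjugate partitions and their diagonal sets\<close>

definition self_conjugate_set :: "int set \<Rightarrow> bool" where
  "self_conjugate_set B \<longleftrightarrow> (\<forall>y. y \<in> B \<longleftrightarrow> - y - 1 \<notin> B)"

definition nonneg_part :: "int set \<Rightarrow> int set" where
  "nonneg_part B = {y \<in> B. 0 \<le> y}"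

definition symmetrize :: "int set \<Rightarrow> int set" where
  "symmetrize P = {y. (0 \<le> y \<and> y \<in> P) \<or> (y < 0 \<and> - y - 1 \<notin> P)}"

definition odd_weight :: "'a::comm_semiring_1 set \<Rightarrow> 'a" where
  "odd_weight S = (\<Sum>y\<in>S. 2 * y + 1)"

definition diagonal_sets :: "int \<Rightarrow> int set set" where
  "diagonal_sets n = {P. finite P \<and> P \<subseteq> {0..} \<and> odd_weight P = n}"

definition self_conjugate_partitions :: "nat \<Rightarrow> nat list set" where
  "self_conjugate_partitions n = {lam \<in> partitions_of n. self_conjugate lam}"

text \<open>For self-conjugate \<open>lam\<close> the numbers \<open>2 y + 1\<close>, \<open>y \<in> diagonal_set lam\<close>, are the hook
  lengths of the diagonal cells.\<close>

definition diagonal_set :: "nat list \<Rightarrow> int set" where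
  "diagonal_set lam = nonneg_part (maya (nth_default 0 lam))"

lemma self_conjugate_setD: "self_conjugate_set B \<Longrightarrow> y \<in> B \<longleftrightarrow> - y - 1 \<notin> B"
  unfolding self_conjugate_set_def by blast

lemma self_conjugate_set_symmetrize: "P \<subseteq> {0..} \<Longrightarrow> self_conjugate_set (symmetrize P)"
  unfolding self_conjugate_set_def symmetrize_def by auto

lemma symmetrize_nonneg_part:
  assumes "self_conjugate_set B" shows "symmetrize (nonneg_part B) = B"
proof (rule set_eqI)
  fix y show "y \<in> symmetrize (nonneg_part B) \<longleftrightarrow> y \<in> B"
    using self_conjugate_setD[OF assms, of y] unfolding symmetrize_def nonneg_part_def by auto
qed

lemma nonneg_part_symmetrize: "P \<subseteq> {0..} \<Longrightarrow> nonneg_part (symmetrize P) = P"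
  unfolding symmetrize_def nonneg_part_def by auto

lemma self_conjugate_set_maya_iff:
  assumes f: "partition_fun f L"
  shows "self_conjugate_set (maya f) \<longleftrightarrow> conj_fun f = f"
proof
  assume sc: "self_conjugate_set (maya f)"
  have "maya (conj_fun f) = maya f"
  proof (rule set_eqI)
    fix y show "y \<in> maya (conj_fun f) \<longleftrightarrow> y \<in> maya f"
      using maya_conj_fun[OF f, of y] self_conjugate_setD[OF sc, of y] by simp
  qed
  then show "conj_fun f = f" using maya_inj[OF partition_fun_conj_fun[OF f] f] by simp
next
  assume "conj_fun f = f"
  then show "self_conjugate_set (maya f)"
    unfolding self_conjugate_set_def using maya_conj_fun[OF f] by metis
qed

lemma self_conjugate_set_maya:
  assumes "is_partition lam" "self_conjugate lam"
  shows "self_conjugate_set (maya (nth_default 0 lam))"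
  using self_conjugate_set_maya_iff[OF partition_fun_nth_default[OF assms(1)]]
    self_conjugate_iff_conj_fun[OF assms(1)] assms(2) by blast

lemma window_split:
  assumes B: "self_conjugate_set B" and P: "nonneg_part B \<subseteq> {0..<int N}"
  shows "B \<inter> {- int N..<int N} = nonneg_part B \<union> (\<lambda>z. - z - 1) ` ({0..<int N} - nonneg_part B)"
    and "nonneg_part B \<inter> (\<lambda>z. - z - 1) ` ({0..<int N} - nonneg_part B) = {}"
proof (rule set_eqI, rule iffI)
  fix y assume y: "y \<in> B \<inter> {- int N..<int N}"
  show "y \<in> nonneg_part B \<union> (\<lambda>z. - z - 1) ` ({0..<int N} - nonneg_part B)"
  proof (cases "0 \<le> y")
    case False
    then have "- y - 1 \<in> {0..<int N} - nonneg_part B"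
      using y self_conjugate_setD[OF B, of y] unfolding nonneg_part_def by auto
    then show ?thesis by (intro UnI2 image_eqI[where x = "- y - 1"]) auto
  qed (use y in \<open>auto simp: nonneg_part_def\<close>)
next
  fix y assume "y \<in> nonneg_part B \<union> (\<lambda>z. - z - 1) ` ({0..<int N} - nonneg_part B)"
  then show "y \<in> B \<inter> {- int N..<int N}"
  proof
    assume "y \<in> nonneg_part B" then show ?thesis using P by (auto simp: nonneg_part_def)
  next
    assume "y \<in> (\<lambda>z. - z - 1) ` ({0..<int N} - nonneg_part B)"
    then obtain z where z: "y = - z - 1" "z \<in> {0..<int N} - nonneg_part B" by auto
    then have "z \<notin> B" unfolding nonneg_part_def by auto
    then show ?thesis using z self_conjugate_setD[OF B, of y] by auto
  qed
next
  show "nonneg_part B \<inter> (\<lambda>z. - z - 1) ` ({0..<int N} - nonneg_part B) = {}"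
    unfolding nonneg_part_def by auto
qed

lemma card_window:
  assumes B: "self_conjugate_set B" and P: "nonneg_part B \<subseteq> {0..<int N}"
  shows "card (B \<inter> {- int N..<int N}) = N"
proof -
  have fin: "finite (nonneg_part B)" using P finite_subset by blast
  have "card (B \<inter> {- int N..<int N})
        = card (nonneg_part B) + card ((\<lambda>z. - z - 1) ` ({0..<int N} - nonneg_part B))"
    unfolding window_split(1)[OF assms]
    by (rule card_Un_disjoint) (use fin window_split(2)[OF assms] in auto)
  also have "card ((\<lambda>z. - z - 1) ` ({0..<int N} - nonneg_part B)) = N - card (nonneg_part B)"
    using card_Diff_subset[OF fin P] by (subst card_image) (auto intro: inj_onI)
  finally show ?thesis using card_mono[OF _ P] by simp
qed

lemma window_sum:
  assumes B: "self_conjugate_set B" and P: "nonneg_part B \<subseteq> {0..<int N}"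
  shows "(\<Sum>y\<in>B \<inter> {- int N..<int N}. y) + (\<Sum>i<N. int i + 1) = odd_weight (nonneg_part B)"
proof -
  let ?P = "nonneg_part B"
  have fin: "finite ?P" using P finite_subset by blast
  have "(\<Sum>y\<in>B \<inter> {- int N..<int N}. y) = (\<Sum>y\<in>?P. y) + (\<Sum>z\<in>{0..<int N} - ?P. - z - 1)"
    unfolding window_split(1)[OF assms]
    by (subst sum.union_disjoint) (use fin window_split(2)[OF assms] in \<open>auto simp: sum.reindex inj_on_def\<close>)
  also have "(\<Sum>z\<in>{0..<int N} - ?P. - z - 1) = (\<Sum>z\<in>{0..<int N}. - z - 1) - (\<Sum>z\<in>?P. - z - 1)"
    by (rule sum_diff) (use P in auto)
  also have "(\<Sum>z\<in>{0..<int N}. - z - 1) = (\<Sum>i<N. - (int i + 1))"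
  proof -
    have "{0..<int N} = int ` {..<N}" by (simp add: image_int_atLeastLessThan lessThan_atLeast0)
    then show ?thesis by (simp add: sum.reindex)
  qed
  also have "\<dots> = - (\<Sum>i<N. int i + 1)" by (rule sum_negf)
  finally have "(\<Sum>y\<in>B \<inter> {- int N..<int N}. y)
      = (\<Sum>y\<in>?P. y) - (\<Sum>i<N. int i + 1) - (\<Sum>z\<in>?P. - z - 1)" by simp
  moreover have "(\<Sum>y\<in>?P. y) - (\<Sum>z\<in>?P. - z - 1) = odd_weight ?P"
    unfolding odd_weight_def by (simp add: sum_subtractf[symmetric] algebra_simps)
  ultimately show ?thesis by linarith
qed

lemma odd_weight_diagonal_set:
  assumes lam: "is_partition lam" "self_conjugate lam"
  shows "odd_weight (diagonal_set lam) = int (sum_list lam)"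
proof -
  let ?f = "nth_default 0 lam"
  define N where "N = length lam + ?f 0"
  have f: "partition_fun ?f (length lam)" by (rule partition_fun_nth_default[OF lam(1)])
  have "y < int N" if "y \<in> maya ?f" for y using maya_above[OF f, of y] that unfolding N_def by linarith
  then have P: "nonneg_part (maya ?f) \<subseteq> {0..<int N}" unfolding nonneg_part_def by auto
  have "maya ?f \<inter> {- int N..<int N} = beta ?f ` {..<N}" by (rule maya_window[OF f]) (auto simp: N_def)
  then have "(\<Sum>y\<in>maya ?f \<inter> {- int N..<int N}. y) = (\<Sum>i<N. beta ?f i)"
    by (simp add: sum.reindex inj_on_subset[OF inj_beta[OF f]])
  also have "\<dots> = (\<Sum>i<N. int (?f i)) - (\<Sum>i<N. int i + 1)"
    unfolding beta_def by (simp add: sum_subtractf[symmetric] algebra_simps)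
  also have "(\<Sum>i<N. int (?f i)) = int (sum_list lam)"
    using sum_list_eq_sum_nth_default[of lam N] N_def by simp
  finally show ?thesis
    using window_sum[OF self_conjugate_set_maya[OF lam] P] unfolding diagonal_set_def by simp
qed

lemma sorted_wrt_greater_nth_gap:
  fixes xs :: "int list"
  assumes "sorted_wrt (>) xs" "i \<le> j" "j < length xs"
  shows "xs ! j + int (j - i) \<le> xs ! i"
  using assms(2,3)
proof (induction j)
  case (Suc j)
  show ?case
  proof (cases "i = Suc j")
    case False
    then have "xs ! Suc j < xs ! j" "xs ! j + int (j - i) \<le> xs ! i"
      using assms(1) Suc unfolding sorted_wrt_iff_nth_less by simp_all
    then show ?thesis using False Suc.prems by simp
  qed simp
qed simp

lemma partition_fun_of_strict_decreasing:
  fixes xs :: "int list"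
  assumes sorted: "sorted_wrt (>) xs" and len: "length xs = N" and lower: "\<forall>y\<in>set xs. - int N \<le> y"
  shows "\<exists>f. partition_fun f N \<and> (\<forall>i<N. beta f i = xs ! i)"
proof -
  have lb: "- int i - 1 \<le> xs ! i" if "i < N" for i
  proof -
    have "- int N \<le> xs ! (N - 1)" using lower that len by simp
    moreover have "xs ! (N - 1) + int (N - 1 - i) \<le> xs ! i"
      by (rule sorted_wrt_greater_nth_gap[OF sorted]) (use that len in auto)
    ultimately show ?thesis using that by simp
  qed
  define f where "f i = (if i < N then nat (xs ! i + int i + 1) else 0)" for i
  have "partition_fun f N"
    unfolding partition_fun_def
  proof (intro conjI allI impI antimonoI)
    fix i j :: nat assume "i \<le> j"
    then show "f j \<le> f i"
      using sorted_wrt_greater_nth_gap[OF sorted, of i j] len unfolding f_def by auto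
  qed (simp add: f_def)
  moreover have "beta f i = xs ! i" if "i < N" for i unfolding beta_def f_def using that lb[of i] by simp
  ultimately show ?thesis by blast
qed

text \<open>The beta numbers are the elements of the window \<open>[-N, N)\<close> in decreasing order.\<close>

lemma maya_realize:
  assumes below: "\<And>y. y < - int N \<Longrightarrow> y \<in> B" and above: "\<And>y. int N \<le> y \<Longrightarrow> y \<notin> B"
    and card: "card (B \<inter> {- int N..<int N}) = N"
  shows "\<exists>f. partition_fun f N \<and> maya f = B"
proof -
  define S where "S = B \<inter> {- int N..<int N}"
  define xs where "xs = rev (sorted_list_of_set S)"
  have set_xs: "set xs = S" and len: "length xs = N" and sorted: "sorted_wrt (>) xs"
    using card unfolding xs_def S_def
    by (simp_all add: sorted_wrt_rev strict_sorted_iff[symmetric])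
  then obtain f where f: "partition_fun f N" and beta_f: "\<And>i. i < N \<Longrightarrow> beta f i = xs ! i"
    using partition_fun_of_strict_decreasing[OF sorted len] unfolding S_def by auto
  have "y \<in> B" if "y = beta f i" for y i
  proof (cases "i < N")
    case True then show ?thesis using that beta_f set_xs len nth_mem unfolding S_def by force
  next
    case False
    then show ?thesis using that beta_beyond[OF f, of i] below by simp
  qed
  moreover have "y \<in> range (beta f)" if "y \<in> B" for y
  proof (cases "y < - int N")
    case True then show ?thesis using maya_below[OF f, of y] unfolding maya_def by simp
  next
    case False
    moreover have "y < int N" using that above[of y] by (meson not_le)
    ultimately have "y \<in> set xs" using that set_xs unfolding S_def by simp
    then obtain i where "i < N" "y = xs ! i" using len by (metis in_set_conv_nth)
    then show ?thesis using beta_f[of i] by (metis rangeI)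
  qed
  ultimately have "maya f = B" unfolding maya_def by blast
  then show ?thesis using f by blast
qed

lemma odd_weight_nonneg: "P \<subseteq> {0..} \<Longrightarrow> (0::int) \<le> odd_weight P"
  unfolding odd_weight_def by (rule sum_nonneg) auto

lemma diagonal_sets_subset:
  assumes "P \<in> diagonal_sets n" shows "P \<subseteq> {0..<n}"
proof
  fix y assume y: "y \<in> P"
  have P: "finite P" "P \<subseteq> {0..}" "odd_weight P = n" using assms unfolding diagonal_sets_def by auto
  then have "2 * y + 1 \<le> odd_weight P"
    unfolding odd_weight_def using y by (intro member_le_sum) auto
  then show "y \<in> {0..<n}" using y P by auto
qed

lemma diagonal_sets_neg:
  assumes "n < 0" shows "diagonal_sets n = {}"
proof -
  have "P \<notin> diagonal_sets n" for P
    using odd_weight_nonneg[of P] assms unfolding diagonal_sets_def by auto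
  then show ?thesis by blast
qed

lemma finite_diagonal_sets: "finite (diagonal_sets n)"
  by (rule finite_subset[of _ "Pow {0..<n}"]) (use diagonal_sets_subset in auto)

lemma diagonal_set_mem:
  assumes "lam \<in> self_conjugate_partitions n"
  shows "diagonal_set lam \<in> diagonal_sets (int n)"
    and "symmetrize (diagonal_set lam) = maya (nth_default 0 lam)"
proof -
  have lam: "is_partition lam" "self_conjugate lam" "sum_list lam = n"
    using assms unfolding self_conjugate_partitions_def partitions_of_def by auto
  have f: "partition_fun (nth_default 0 lam) (length lam)" by (rule partition_fun_nth_default[OF lam(1)])
  have "y < int (nth_default 0 lam 0)" if "y \<in> maya (nth_default 0 lam)" for y
    using maya_above[OF f, of y] that by linarith
  then have "diagonal_set lam \<subseteq> {0..<int (nth_default 0 lam 0)}"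
    unfolding diagonal_set_def nonneg_part_def by auto
  then show "diagonal_set lam \<in> diagonal_sets (int n)"
    using odd_weight_diagonal_set[OF lam(1,2)] lam(3) unfolding diagonal_sets_def
    by (auto intro: finite_subset)
  show "symmetrize (diagonal_set lam) = maya (nth_default 0 lam)"
    unfolding diagonal_set_def by (rule symmetrize_nonneg_part[OF self_conjugate_set_maya[OF lam(1,2)]])
qed

lemma diagonal_set_surj:
  assumes P: "P \<in> diagonal_sets (int n)"
  shows "\<exists>lam \<in> self_conjugate_partitions n. diagonal_set lam = P"
proof -
  have P0: "P \<subseteq> {0..}" and wP: "odd_weight P = int n" using P unfolding diagonal_sets_def by auto
  let ?B = "symmetrize P"
  have B: "self_conjugate_set ?B" by (rule self_conjugate_set_symmetrize[OF P0])
  have Pn: "nonneg_part ?B \<subseteq> {0..<int n}"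
    using nonneg_part_symmetrize[OF P0] diagonal_sets_subset[OF P] by simp
  have "\<exists>f. partition_fun f n \<and> maya f = ?B"
    using Pn card_window[OF B Pn] unfolding nonneg_part_def
    by (intro maya_realize) (auto simp: symmetrize_def)
  then obtain f where f: "partition_fun f n" "maya f = ?B" by blast
  obtain lam where "is_partition lam" "nth_default 0 lam = f"
    using partition_fun_imp_partition[OF f(1)] by blast
  then have lam: "is_partition lam" "maya (nth_default 0 lam) = ?B" using f(2) by simp_all
  have sc: "self_conjugate lam"
    using lam B self_conjugate_set_maya_iff[OF partition_fun_nth_default[OF lam(1)]]
    by (simp add: self_conjugate_iff_conj_fun[OF lam(1)])
  have "diagonal_set lam = P" unfolding diagonal_set_def lam(2) by (rule nonneg_part_symmetrize[OF P0])
  moreover have "sum_list lam = n" using odd_weight_diagonal_set[OF lam(1) sc] wP calculation by simp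
  ultimately show ?thesis using lam(1) sc unfolding self_conjugate_partitions_def partitions_of_def by auto
qed

lemma bij_betw_diagonal_set:
  "bij_betw diagonal_set (self_conjugate_partitions n) (diagonal_sets (int n))"
proof (rule bij_betw_imageI)
  show "inj_on diagonal_set (self_conjugate_partitions n)"
  proof (rule inj_onI)
    fix lam mu
    assume lam: "lam \<in> self_conjugate_partitions n" and mu: "mu \<in> self_conjugate_partitions n"
      and eq: "diagonal_set lam = diagonal_set mu"
    have "is_partition lam" "is_partition mu"
      using lam mu unfolding self_conjugate_partitions_def partitions_of_def by auto
    moreover have "maya (nth_default 0 lam) = maya (nth_default 0 mu)"
      using diagonal_set_mem(2)[OF lam] diagonal_set_mem(2)[OF mu] eq by simp
    ultimately show "lam = mu"
      using maya_inj[OF partition_fun_nth_default partition_fun_nth_default] partition_eqI by blast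
  qed
  show "diagonal_set ` self_conjugate_partitions n = diagonal_sets (int n)"
    using diagonal_set_mem(1) diagonal_set_surj by blast
qed

lemma sc_eq_card_diagonal_sets: "sc m = card (diagonal_sets m)"
proof (cases "m < 0")
  case True then show ?thesis unfolding sc_def using diagonal_sets_neg by simp
next
  case False
  then show ?thesis
    using bij_betw_same_card[OF bij_betw_diagonal_set, of "nat m"]
    unfolding sc_def self_conjugate_partitions_def by simp
qed

lemma a_star_eq_sum_diagonal_sets:
  "a_star t n = (\<Sum>P\<in>diagonal_sets (int n). card (down_moves t (symmetrize P)))"
proof -
  have "a_star t n = (\<Sum>lam\<in>self_conjugate_partitions n. card (down_moves t (symmetrize (diagonal_set lam))))"
    unfolding a_star_def self_conjugate_partitions_def[symmetric]
  proof (rule sum.cong[OF refl])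
    fix lam assume lam: "lam \<in> self_conjugate_partitions n"
    then have "is_partition lam" unfolding self_conjugate_partitions_def partitions_of_def by auto
    then show "n_hook t lam = card (down_moves t (symmetrize (diagonal_set lam)))"
      unfolding diagonal_set_mem(2)[OF lam] by (rule n_hook_eq_card_down_moves)
  qed
  also have "\<dots> = (\<Sum>P\<in>diagonal_sets (int n). card (down_moves t (symmetrize P)))"
    by (rule sum.reindex_bij_betw[OF bij_betw_diagonal_set])
  finally show ?thesis .
qed

section \<open>Sliding beads by \<open>t\<close>\<close>

definition up_moves :: "nat \<Rightarrow> int set \<Rightarrow> int set" where
  "up_moves t B = {y \<in> B. y + int t \<notin> B}"

lemma sum_shift_int: "(\<Sum>y\<in>{a..<b}. g (y + c)) = (\<Sum>y\<in>{a + c..<b + c}. g (y :: int))"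
  by (rule sum.reindex_bij_witness[where i = "\<lambda>y. y - c" and j = "\<lambda>y. y + c"]) auto

lemma sum_telescope_int:
  fixes g :: "int \<Rightarrow> 'a::ab_group_add"
  assumes "0 \<le> c" "a + c \<le> b"
  shows "(\<Sum>y\<in>{a..<b}. g y - g (y + c)) = (\<Sum>y\<in>{a..<a + c}. g y) - (\<Sum>y\<in>{b..<b + c}. g y)"
proof -
  have "(\<Sum>y\<in>{a..<b}. g y) = (\<Sum>y\<in>{a..<a + c}. g y) + (\<Sum>y\<in>{a + c..<b}. g y)"
    using assms by (subst ivl_disj_un_two(3)[of a "a + c" b, symmetric]) (auto intro: sum.union_disjoint)
  moreover have "(\<Sum>y\<in>{a + c..<b + c}. g y) = (\<Sum>y\<in>{a + c..<b}. g y) + (\<Sum>y\<in>{b..<b + c}. g y)"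
    using assms by (subst ivl_disj_un_two(3)[of "a + c" b "b + c", symmetric]) (auto intro: sum.union_disjoint)
  ultimately show ?thesis by (simp add: sum_subtractf sum_shift_int)
qed

text \<open>Only finitely many beads and holes are off their vacuum positions, and summing
  \<open>[y \<in> B] - [y + t \<in> B]\<close> over a long enough window telescopes to \<open>t\<close>.\<close>

lemma card_up_moves:
  assumes below: "\<And>y. y < - R \<Longrightarrow> y \<in> B" and above: "\<And>y. R \<le> y \<Longrightarrow> y \<notin> B"
  shows "card (up_moves t B) = card (down_moves t B) + t"
proof -
  have R: "0 \<le> R" using below[of R] above[of R] by fastforce
  have in_B: "y < R" if "y \<in> B" for y using above[of y] that by (meson not_le)
  have notin_B: "- R \<le> y" if "y \<notin> B" for y using below[of y] that by (meson not_le)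
  define I where "I = {- R - int t..<R}"
  define X where "X y = (if y \<in> B then 1 else 0 :: int)" for y
  define D where "D = {y. y \<notin> B \<and> y + int t \<in> B}"
  have "down_moves t B = (\<lambda>y. y + int t) ` D"
    unfolding down_moves_def D_def by (force intro: rev_image_eqI[where x = "_ - int t"])
  then have card_D: "card (down_moves t B) = card D" by (simp add: card_image inj_on_def)
  have "up_moves t B = {y \<in> I. y \<in> B \<and> y + int t \<notin> B}"
    unfolding up_moves_def I_def by (auto dest: in_B notin_B)
  then have up: "int (card (up_moves t B)) = (\<Sum>y\<in>I. if y \<in> B \<and> y + int t \<notin> B then 1 else 0)"
    by (simp add: sum.If_cases I_def Int_def)
  have "D = {y \<in> I. y \<notin> B \<and> y + int t \<in> B}"
    unfolding D_def I_def by (auto dest: in_B notin_B)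
  then have down: "int (card D) = (\<Sum>y\<in>I. if y \<notin> B \<and> y + int t \<in> B then 1 else 0)"
    by (simp add: sum.If_cases I_def Int_def)
  have "int (card (up_moves t B)) - int (card D) = (\<Sum>y\<in>I. X y - X (y + int t))"
    unfolding up down sum_subtractf[symmetric] X_def by (rule sum.cong) auto
  also have "\<dots> = (\<Sum>y\<in>{- R - int t..<- R}. X y) - (\<Sum>y\<in>{R..<R + int t}. X y)"
    unfolding I_def using R by (subst sum_telescope_int) auto
  also have "\<dots> = int t"
    using below above by (simp add: X_def)
  finally show ?thesis using card_D by simp
qed

lemma finite_moves:
  assumes below: "\<And>y. y < - R \<Longrightarrow> y \<in> B" and above: "\<And>y. R \<le> y \<Longrightarrow> y \<notin> B"
  shows "finite (up_moves t B)" and "finite (down_moves t B)"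
proof -
  have in_B: "y < R" if "y \<in> B" for y using above[of y] that by (meson not_le)
  have notin_B: "- R \<le> y" if "y \<notin> B" for y using below[of y] that by (meson not_le)
  have "up_moves t B \<subseteq> {- R - int t..<R}"
    using in_B notin_B[of "_ + int t"] unfolding up_moves_def by fastforce
  moreover have "down_moves t B \<subseteq> {- R..<R + int t}"
    using in_B notin_B[of "_ - int t"] unfolding down_moves_def by fastforce
  ultimately
  show "finite (up_moves t B)" "finite (down_moves t B)" by (auto intro: finite_subset)
qed

lemma moves_symmetrize:
  assumes P: "P \<in> diagonal_sets n"
  shows "finite (up_moves t (symmetrize P))" and "finite (down_moves t (symmetrize P))"
    and "card (up_moves t (symmetrize P)) = card (down_moves t (symmetrize P)) + t"
proof -
  have n: "0 \<le> n" using P odd_weight_nonneg unfolding diagonal_sets_def by auto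
  have "y \<notin> P" if "y < 0 \<or> n \<le> y" for y using diagonal_sets_subset[OF P] that by auto
  then have below: "y < - n \<Longrightarrow> y \<in> symmetrize P"
    and above: "n \<le> y \<Longrightarrow> y \<notin> symmetrize P" for y
    using n unfolding symmetrize_def by auto
  show "finite (up_moves t (symmetrize P))" "finite (down_moves t (symmetrize P))"
    using finite_moves[OF below above] by blast+
  show "card (up_moves t (symmetrize P)) = card (down_moves t (symmetrize P)) + t"
    using card_up_moves[OF below above] by blast
qed

definition move_bead :: "int set \<Rightarrow> int \<Rightarrow> int \<Rightarrow> int set" where
  "move_bead B a b = (B - {a, - b - 1}) \<union> {b, - a - 1}"

lemma move_bead:
  assumes B: "self_conjugate_set B" and a: "a \<in> B" and b: "b \<notin> B" and ab: "a \<noteq> b" "a + b \<noteq> -1"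
  shows "self_conjugate_set (move_bead B a b)" and "b \<in> move_bead B a b" and "a \<notin> move_bead B a b"
    and "move_bead (move_bead B a b) b a = B"
proof -
  have mirror: "- a - 1 \<notin> B" "- b - 1 \<in> B" "a \<noteq> - a - 1" "b \<noteq> - b - 1"
    using self_conjugate_setD[OF B, of a] self_conjugate_setD[OF B, of b] a b by presburger+
  show "self_conjugate_set (move_bead B a b)" unfolding self_conjugate_set_def
  proof
    fix y
    show "y \<in> move_bead B a b \<longleftrightarrow> - y - 1 \<notin> move_bead B a b"
    proof (cases "y \<in> {a, b, - a - 1, - b - 1}")
      case True
      then show ?thesis using mirror ab unfolding move_bead_def by auto
    next
      case False
      then have "- y - 1 \<notin> {a, b, - a - 1, - b - 1}" by auto
      then show ?thesis using False self_conjugate_setD[OF B, of y] unfolding move_bead_def by auto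
    qed
  qed
  show "b \<in> move_bead B a b" "a \<notin> move_bead B a b" "move_bead (move_bead B a b) b a = B"
    using a b ab mirror unfolding move_bead_def by auto
qed

lemma sum_replace_two:
  fixes X :: "'a::ab_group_add set"
  assumes "finite X" "a \<in> X" "c \<in> X" "a \<noteq> c" "b \<notin> X" "d \<notin> X" "b \<noteq> d"
  shows "(\<Sum>y\<in>(X - {a, c}) \<union> {b, d}. y) = (\<Sum>y\<in>X. y) - a - c + b + d"
proof -
  have "(\<Sum>y\<in>X. y) = a + (c + (\<Sum>y\<in>X - {a, c}. y))"
    using assms by (simp add: sum.remove[of X a] sum.remove[of "X - {a}" c] Diff_insert2[symmetric]
        insert_commute)
  moreover have "(X - {a, c}) \<union> {b, d} = insert b (insert d (X - {a, c}))" by auto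
  ultimately show ?thesis using assms by (simp add: algebra_simps)
qed

definition slide :: "int set \<Rightarrow> int \<Rightarrow> int \<Rightarrow> int set" where
  "slide P a b = nonneg_part (move_bead (symmetrize P) a b)"

lemma symmetrize_slide:
  assumes P: "P \<in> diagonal_sets m" and a: "a \<in> symmetrize P" and b: "b \<notin> symmetrize P"
    and ab: "a \<noteq> b" "a + b \<noteq> -1"
  shows "symmetrize (slide P a b) = move_bead (symmetrize P) a b"
  unfolding slide_def using P unfolding diagonal_sets_def
  by (intro symmetrize_nonneg_part move_bead(1)[OF self_conjugate_set_symmetrize a b ab]) auto

lemma slide_mem_diagonal_sets:
  assumes P: "P \<in> diagonal_sets m" and a: "a \<in> symmetrize P" and b: "b \<notin> symmetrize P"
    and ab: "a \<noteq> b" "a + b \<noteq> -1"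
  shows "slide P a b \<in> diagonal_sets (m + 2 * (b - a))"
proof -
  have P0: "P \<subseteq> {0..}" and wP: "odd_weight P = m" using P unfolding diagonal_sets_def by auto
  have m: "0 \<le> m" using wP odd_weight_nonneg[OF P0] by simp
  let ?B = "symmetrize P" and ?B' = "move_bead (symmetrize P) a b"
  have B: "self_conjugate_set ?B" by (rule self_conjugate_set_symmetrize[OF P0])
  have B': "self_conjugate_set ?B'" by (rule move_bead(1)[OF B a b ab])
  define N where "N = nat (m + \<bar>a\<bar> + \<bar>b\<bar> + 1)"
  have N: "int N = m + \<bar>a\<bar> + \<bar>b\<bar> + 1" unfolding N_def using m by simp
  define W where "W = {- int N..<int N}"
  have in_W: "a \<in> W" "b \<in> W" "- a - 1 \<in> W" "- b - 1 \<in> W" unfolding W_def N_def using m by auto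
  have "y < int N" if "y \<in> P" for y
  proof -
    have "y < m" using diagonal_sets_subset[OF P] that by auto
    then show ?thesis unfolding N by linarith
  qed
  then have PN: "nonneg_part ?B \<subseteq> {0..<int N}" using P0 unfolding nonneg_part_symmetrize[OF P0] by auto
  then have PN': "nonneg_part ?B' \<subseteq> {0..<int N}"
    using in_W unfolding move_bead_def nonneg_part_def W_def by auto
  have "- a - 1 \<notin> ?B" "- b - 1 \<in> ?B"
    using self_conjugate_setD[OF B, of a] self_conjugate_setD[OF B, of b] a b by auto
  then have "(\<Sum>y\<in>((?B \<inter> W) - {a, - b - 1}) \<union> {b, - a - 1}. y)
      = (\<Sum>y\<in>?B \<inter> W. y) - a - (- b - 1) + b + (- a - 1)"
    using a b ab in_W by (intro sum_replace_two) (auto simp: W_def)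
  moreover have "?B' \<inter> W = ((?B \<inter> W) - {a, - b - 1}) \<union> {b, - a - 1}"
    unfolding move_bead_def using in_W by auto
  ultimately have "(\<Sum>y\<in>?B' \<inter> W. y) = (\<Sum>y\<in>?B \<inter> W. y) + 2 * (b - a)" by simp
  then have "odd_weight (slide P a b) = odd_weight P + 2 * (b - a)"
    using window_sum[OF B' PN'] window_sum[OF B PN] nonneg_part_symmetrize[OF P0]
    unfolding W_def slide_def by simp
  moreover have "finite (slide P a b)" "slide P a b \<subseteq> {0..}"
    using PN' finite_subset unfolding slide_def nonneg_part_def by auto
  ultimately show ?thesis unfolding diagonal_sets_def using wP by simp
qed

lemma slide_back:
  assumes P: "P \<in> diagonal_sets m" and a: "a \<in> symmetrize P" and b: "b \<notin> symmetrize P"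
    and ab: "a \<noteq> b" "a + b \<noteq> -1"
  shows "b \<in> symmetrize (slide P a b)" and "a \<notin> symmetrize (slide P a b)"
    and "slide (slide P a b) b a = P"
proof -
  have P0: "P \<subseteq> {0..}" using P unfolding diagonal_sets_def by auto
  note B = self_conjugate_set_symmetrize[OF P0]
  show "b \<in> symmetrize (slide P a b)" "a \<notin> symmetrize (slide P a b)"
    using move_bead(2,3)[OF B a b ab] unfolding symmetrize_slide[OF assms] by auto
  have "slide (slide P a b) b a = nonneg_part (move_bead (move_bead (symmetrize P) a b) b a)"
    by (simp add: slide_def[of "slide P a b"] symmetrize_slide[OF assms])
  then show "slide (slide P a b) b a = P"
    using move_bead(4)[OF B a b ab] nonneg_part_symmetrize[OF P0] by simp
qed

text \<open>The bead and its mirror image slide \<open>t\<close> positions down; the inverse slides them back up.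
  Evenness of \<open>t\<close> keeps a sliding bead away from its own mirror image.\<close>

lemma card_down_moves_eq_card_up_moves:
  assumes "even t" "0 < t"
  shows "card (SIGMA P:diagonal_sets n. down_moves t (symmetrize P))
       = card (SIGMA Q:diagonal_sets (n - 2 * int t). up_moves t (symmetrize Q))"
    (is "card ?hooks = card ?ups")
proof -
  define down where "down = (\<lambda>(P, k). (slide P k (k - int t), k - int t))"
  define up where "up = (\<lambda>(Q, a). (slide Q a (a + int t), a + int t))"
  have ne: "k \<noteq> k - int t" "k + (k - int t) \<noteq> -1" "a \<noteq> a + int t" "a + (a + int t) \<noteq> -1" for k a
    using assms by presburger+
  have "bij_betw down ?hooks ?ups"
  proof (rule bij_betw_byWitness[where f' = up])
    show "\<forall>x\<in>?hooks. up (down x) = x"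
      using slide_back(3)[OF _ _ _ ne(1,2)] by (auto simp: up_def down_def down_moves_def)
    show "\<forall>y\<in>?ups. down (up y) = y"
      using slide_back(3)[OF _ _ _ ne(3,4)] by (auto simp: up_def down_def up_moves_def)
    show "down ` ?hooks \<subseteq> ?ups"
      using slide_mem_diagonal_sets[OF _ _ _ ne(1,2)] slide_back(1,2)[OF _ _ _ ne(1,2)]
      by (fastforce simp: down_def down_moves_def up_moves_def)
    show "up ` ?ups \<subseteq> ?hooks"
      using slide_mem_diagonal_sets[OF _ _ _ ne(3,4)] slide_back(1,2)[OF _ _ _ ne(3,4)]
      by (fastforce simp: up_def down_moves_def up_moves_def)
  qed
  then show ?thesis by (rule bij_betw_same_card)
qed

definition hook_count :: "nat \<Rightarrow> int \<Rightarrow> nat" where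
  "hook_count t n = (\<Sum>P\<in>diagonal_sets n. card (down_moves t (symmetrize P)))"

lemma hook_count_rec:
  assumes "even t" "0 < t"
  shows "hook_count t n = hook_count t (n - 2 * int t) + t * card (diagonal_sets (n - 2 * int t))"
proof -
  have "hook_count t n = card (SIGMA P:diagonal_sets n. down_moves t (symmetrize P))"
    unfolding hook_count_def using finite_diagonal_sets moves_symmetrize(2) by (simp add: card_SigmaI)
  also have "\<dots> = card (SIGMA Q:diagonal_sets (n - 2 * int t). up_moves t (symmetrize Q))"
    by (rule card_down_moves_eq_card_up_moves[OF assms])
  also have "\<dots> = (\<Sum>Q\<in>diagonal_sets (n - 2 * int t). card (down_moves t (symmetrize Q)) + t)"
    using finite_diagonal_sets moves_symmetrize(1,3) by (simp add: card_SigmaI)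
  finally show ?thesis unfolding hook_count_def by (simp add: sum.distrib)
qed

lemma a_star_eq_sum_sc:
  assumes "even t" "0 < t" "1 \<le> n"
  shows "a_star t n = t * (\<Sum>j=1..n. sc (int n - 2 * int t * int j))"
proof -
  have iter: "hook_count t (int n) = hook_count t (int n - 2 * int t * int m)
      + t * (\<Sum>j=1..m. sc (int n - 2 * int t * int j))" for m
  proof (induction m)
    case (Suc m)
    then show ?case
      using hook_count_rec[OF assms(1,2), of "int n - 2 * int t * int m"]
      by (simp add: sc_eq_card_diagonal_sets algebra_simps)
  qed simp
  have "int n - 2 * int t * int n < 0" using assms(2,3) by (simp add: mult_less_cancel_right1)
  then have "hook_count t (int n - 2 * int t * int n) = 0"
    unfolding hook_count_def by (simp add: diagonal_sets_neg)
  then show ?thesis using iter[of n] unfolding a_star_eq_sum_diagonal_sets hook_count_def[symmetric] by simp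
qed

section \<open>Partitions into distinct odd parts\<close>

text \<open>\<open>S \<in> odd_part_sets m\<close> encodes the partition of \<open>m\<close> into the distinct odd parts
  \<open>2 j + 1\<close>, \<open>j \<in> S\<close>.\<close>

definition odd_part_sets :: "nat \<Rightarrow> nat set set" where
  "odd_part_sets m = {S. finite S \<and> odd_weight S = m}"

lemma odd_part_sets_subset:
  assumes "S \<in> odd_part_sets m" shows "S \<subseteq> {..<m}"
proof
  fix j assume "j \<in> S"
  then have "2 * j + 1 \<le> odd_weight S"
    using assms unfolding odd_part_sets_def odd_weight_def by (intro member_le_sum) auto
  then show "j \<in> {..<m}" using assms unfolding odd_part_sets_def by simp
qed

lemma finite_odd_part_sets: "finite (odd_part_sets m)"
  by (rule finite_subset[of _ "Pow {..<m}"]) (use odd_part_sets_subset in auto)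

lemma odd_weight_image_int: "odd_weight (int ` S) = int (odd_weight S)"
  unfolding odd_weight_def by (simp add: sum.reindex add.commute)

lemma sc_eq_card_odd_part_sets: "sc (int m) = card (odd_part_sets m)"
proof -
  have "bij_betw (image int) (odd_part_sets m) (diagonal_sets (int m))"
  proof (rule bij_betw_imageI)
    show "inj_on (image int) (odd_part_sets m)" by (rule inj_onI) (simp add: inj_image_eq_iff)
    have "S \<in> image int ` odd_part_sets m" if "S \<in> diagonal_sets (int m)" for S
    proof -
      have S: "S \<subseteq> {0..}" "finite S" "odd_weight S = int m"
        using that unfolding diagonal_sets_def by auto
      have "int ` nat ` S = (\<lambda>x. x) ` S" unfolding image_image by (rule image_cong) (use S(1) in auto)
      then have eq: "int ` nat ` S = S" by simp
      then have "int (odd_weight (nat ` S)) = int m" using S(3) odd_weight_image_int[of "nat ` S"] by simp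
      then have "nat ` S \<in> odd_part_sets m" using S(2) unfolding odd_part_sets_def by simp
      then show ?thesis using eq by (intro image_eqI[where x = "nat ` S"]) simp_all
    qed
    moreover have "image int ` odd_part_sets m \<subseteq> diagonal_sets (int m)"
      unfolding odd_part_sets_def diagonal_sets_def by (auto simp: odd_weight_image_int)
    ultimately show "image int ` odd_part_sets m = diagonal_sets (int m)" by blast
  qed
  then show ?thesis by (simp add: sc_eq_card_diagonal_sets bij_betw_same_card)
qed

lemma odd_weight_half_odd:
  fixes A :: "nat set"
  assumes "finite A" "\<forall>p\<in>A. odd p"
  shows "odd_weight ((\<lambda>p. p div 2) ` A) = (\<Sum>p\<in>A. p)"
proof -
  have "inj_on (\<lambda>p. p div 2) A"
    using assms(2) by (intro inj_onI) (metis odd_two_times_div_two_succ)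
  then show ?thesis
    unfolding odd_weight_def using assms(2) by (simp add: sum.reindex odd_two_times_div_two_succ)
qed

lemma bij_betw_odd_parts:
  "bij_betw (\<lambda>lam. (\<lambda>p. p div 2) ` set lam)
     {lam \<in> partitions_of m. sorted_wrt (>) lam \<and> (\<forall>p\<in>set lam. odd p)} (odd_part_sets m)"
  (is "bij_betw ?half ?Q _")
proof (rule bij_betw_byWitness[where f' = "\<lambda>S. rev (sorted_list_of_set ((\<lambda>j. 2 * j + 1) ` S))"])
  let ?list = "\<lambda>S. rev (sorted_list_of_set ((\<lambda>j. 2 * j + 1) ` S))"
  have set_inv: "(\<lambda>j. 2 * j + 1) ` (\<lambda>p. p div 2) ` A = A" if "\<forall>p\<in>A. odd p" for A :: "nat set"
    using that by (force simp: image_image odd_two_times_div_two_succ intro: image_eqI)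
  show "\<forall>lam\<in>?Q. ?list (?half lam) = lam"
    using set_inv by (auto simp: sorted_wrt_rev rev_swap intro!: strict_sorted_equal)
  show "\<forall>S\<in>odd_part_sets m. ?half (?list S) = S"
    unfolding odd_part_sets_def by (auto simp: image_image)
  show "?half ` ?Q \<subseteq> odd_part_sets m"
  proof (rule image_subsetI)
    fix lam assume "lam \<in> ?Q"
    then have lam: "sum_list lam = m" "sorted_wrt (<) (rev lam)" "\<forall>p\<in>set lam. odd p"
      unfolding partitions_of_def by (simp_all add: sorted_wrt_rev)
    then have "distinct lam" by (simp add: strict_sorted_iff)
    then have "odd_weight ((\<lambda>p. p div 2) ` set lam) = m"
      using odd_weight_half_odd[of "set lam"] lam(1,3) by (simp add: distinct_sum_list_conv_Sum)
    then show "?half lam \<in> odd_part_sets m" unfolding odd_part_sets_def by simp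
  qed
  show "?list ` odd_part_sets m \<subseteq> ?Q"
  proof (rule image_subsetI)
    fix S assume S: "S \<in> odd_part_sets m"
    let ?A = "(\<lambda>j. 2 * j + 1) ` S"
    have fin: "finite S" "finite ?A" and wS: "odd_weight S = m"
      using S unfolding odd_part_sets_def by simp_all
    have sorted: "sorted_wrt (>) (?list S)" by (simp add: sorted_wrt_rev)
    have set_list: "set (?list S) = ?A" using fin by simp
    have "sorted_wrt (\<ge>) (?list S)" using sorted by (rule sorted_wrt_mono_rel[rotated]) simp
    moreover have "\<forall>p\<in>set (?list S). 0 < p \<and> odd p" unfolding set_list by auto
    moreover have "sum_list (?list S) = (\<Sum>p\<in>?A. p)"
      using fin(2) by (simp add: distinct_sum_list_conv_Sum)
    moreover have "(\<Sum>p\<in>?A. p) = odd_weight S"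
      unfolding odd_weight_def by (simp add: sum.reindex inj_on_def)
    ultimately show "?list S \<in> ?Q"
      using sorted wS unfolding partitions_of_def is_partition_def by simp
  qed
qed

lemma q_star_eq_sc: "q_star k = sc k"
proof (cases "k < 0")
  case True then show ?thesis unfolding q_star_def sc_def by simp
next
  case False
  then have "q_star k = card (odd_part_sets (nat k))"
    unfolding q_star_def using bij_betw_same_card[OF bij_betw_odd_parts] by simp
  also have "\<dots> = sc k" using sc_eq_card_odd_part_sets[of "nat k"] False by simp
  finally show ?thesis .
qed

section \<open>The generating function of self-conjugate partitions\<close>

lemma odd_weight_le_square:
  fixes S :: "nat set"
  assumes "S \<subseteq> {..<N}" shows "odd_weight S \<le> N * N"
proof -
  have "odd_weight S \<le> odd_weight {..<N}" unfolding odd_weight_def by (rule sum_mono2) (use assms in auto)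
  also have "odd_weight {..<N} = N * N" unfolding odd_weight_def by (induction N) auto
  finally show ?thesis .
qed

lemma prod_odd_powers_eq_sum:
  fixes q :: "'a::comm_ring_1"
  shows "(\<Prod>j<N. 1 + q ^ (2 * j + 1)) = (\<Sum>S\<in>Pow {..<N}. q ^ odd_weight S)"
proof -
  have "(\<Prod>j<N. 1 + q ^ (2 * j + 1)) = (\<Prod>j<N. q ^ (2 * j + 1) + 1)" by (simp add: add.commute)
  also have "\<dots> = (\<Sum>S\<in>Pow {..<N}. (\<Prod>j\<in>S. q ^ (2 * j + 1)) * (\<Prod>j\<in>{..<N} - S. 1))"
    by (rule prod_add) simp
  finally show ?thesis unfolding odd_weight_def by (simp add: power_sum)
qed

lemma prod_odd_powers_sums:
  fixes q :: "'a::real_normed_field"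
  shows "(\<lambda>m. of_nat (card {S \<in> Pow {..<N}. odd_weight S = m}) * q ^ m) sums (\<Prod>j<N. 1 + q ^ (2 * j + 1))"
proof -
  have "(\<Prod>j<N. 1 + q ^ (2 * j + 1))
      = (\<Sum>m\<le>N * N. \<Sum>S\<in>{S \<in> Pow {..<N}. odd_weight S = m}. q ^ odd_weight S)"
    unfolding prod_odd_powers_eq_sum
    by (rule sum.group[symmetric]) (auto dest: odd_weight_le_square)
  also have "\<dots> = (\<Sum>m\<le>N * N. of_nat (card {S \<in> Pow {..<N}. odd_weight S = m}) * q ^ m)" by simp
  finally have eq: "(\<Prod>j<N. 1 + q ^ (2 * j + 1))
      = (\<Sum>m\<le>N * N. of_nat (card {S \<in> Pow {..<N}. odd_weight S = m}) * q ^ m)" .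
  show ?thesis unfolding eq by (rule sums_finite) (auto simp: not_le dest!: odd_weight_le_square)
qed

lemma card_odd_subsets_le: "card {S \<in> Pow {..<N}. odd_weight S = m} \<le> sc (int m)"
  unfolding sc_eq_card_odd_part_sets
  by (rule card_mono[OF finite_odd_part_sets]) (auto simp: odd_part_sets_def intro: finite_subset)

lemma card_odd_subsets_eq:
  assumes "m \<le> 2 * N" shows "card {S \<in> Pow {..<N}. odd_weight S = m} = sc (int m)"
proof -
  have "S \<subseteq> {..<N}" if "S \<in> odd_part_sets m" for S
  proof
    fix j assume "j \<in> S"
    then have "2 * j + 1 \<le> odd_weight S"
      using that unfolding odd_part_sets_def odd_weight_def by (intro member_le_sum) auto
    then show "j \<in> {..<N}" using that assms unfolding odd_part_sets_def by simp
  qed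
  then have "{S \<in> Pow {..<N}. odd_weight S = m} = odd_part_sets m"
    unfolding odd_part_sets_def by (auto intro: finite_subset)
  then show ?thesis by (simp add: sc_eq_card_odd_part_sets)
qed

lemma convergent_prod_odd_powers:
  fixes q :: "'a::{real_normed_field,banach}"
  assumes "norm q < 1" shows "convergent_prod (\<lambda>j. 1 + q ^ (2 * j + 1))"
proof -
  have "summable (\<lambda>j. norm q * (norm q ^ 2) ^ j)"
    using assms by (intro summable_mult summable_geometric) (simp add: power_less_one_iff)
  moreover have "norm ((1 + q ^ (2 * j + 1)) - 1) = norm q * (norm q ^ 2) ^ j" for j
    by (simp add: norm_mult norm_power power_mult[symmetric] mult.commute)
  ultimately have "summable (\<lambda>j. norm ((1 + q ^ (2 * j + 1)) - 1))" by simp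
  then show ?thesis
    by (intro abs_convergent_prod_imp_convergent_prod summable_imp_abs_convergent_prod)
qed

lemma summable_sc:
  fixes r :: real
  assumes "0 \<le> r" "r < 1"
  shows "summable (\<lambda>m. real (sc (int m)) * r ^ m)"
proof (rule summableI_nonneg_bounded)
  show "0 \<le> real (sc (int m)) * r ^ m" for m using assms by simp
  fix k
  let ?c = "\<lambda>m. real (card {S \<in> Pow {..<k}. odd_weight S = m}) * r ^ m"
  have "(\<Sum>m<k. real (sc (int m)) * r ^ m) = (\<Sum>m<k. ?c m)"
  proof (rule sum.cong[OF refl])
    fix m assume "m \<in> {..<k}"
    then show "real (sc (int m)) * r ^ m = ?c m" using card_odd_subsets_eq[of m k] by simp
  qed
  also have "\<dots> \<le> (\<Sum>m. ?c m)"
    using prod_odd_powers_sums[of k r] assms by (intro sum_le_suminf) (auto simp: sums_summable)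
  also have "\<dots> = (\<Prod>j<k. 1 + r ^ (2 * j + 1))" using prod_odd_powers_sums[of k r] by (rule sums_unique[symmetric])
  also have "\<dots> \<le> (\<Prod>j. 1 + r ^ (2 * j + 1))"
    using convergent_prod_odd_powers[of r] assms by (intro prod_le_prodinf) auto
  finally show "(\<Sum>m<k. real (sc (int m)) * r ^ m) \<le> (\<Prod>j. 1 + r ^ (2 * j + 1))" .
qed

text \<open>Tannery's theorem lets us pass to the limit in the finite expansions of the partial
  products.\<close>

lemma sc_sums:
  fixes q :: complex
  assumes q: "norm q < 1"
  shows "(\<lambda>m. of_nat (sc (int m)) * q ^ m) sums (\<Prod>j. 1 + q ^ (2 * j + 1))"
proof -
  define a where "a m N = of_nat (card {S \<in> Pow {..<N}. odd_weight S = m}) * q ^ m" for m N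
  have lim: "(\<lambda>N. a m N) \<longlonglongrightarrow> of_nat (sc (int m)) * q ^ m" for m
  proof (rule tendsto_eventually)
    show "\<forall>\<^sub>F N in sequentially. a m N = of_nat (sc (int m)) * q ^ m"
      using eventually_ge_at_top[of m]
      by eventually_elim (use card_odd_subsets_eq[of m] in \<open>simp add: a_def\<close>)
  qed
  have bound: "norm (a m N) \<le> real (sc (int m)) * norm q ^ m" for m N
  proof -
    have "real (card {S \<in> Pow {..<N}. odd_weight S = m}) \<le> real (sc (int m))"
      using card_odd_subsets_le[of N m] by linarith
    then show ?thesis unfolding a_def norm_mult norm_power norm_of_nat by (rule mult_right_mono) simp
  qed
  have "summable (\<lambda>m. real (sc (int m)) * norm q ^ m)" using q by (intro summable_sc) auto
  then have summable: "summable (\<lambda>m. norm (of_nat (sc (int m)) * q ^ m) :: real)"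
    and tendsto: "(\<lambda>N. \<Sum>m. a m N) \<longlonglongrightarrow> (\<Sum>m. of_nat (sc (int m)) * q ^ m)"
    using tannerys_theorem[OF lim always_eventually[OF allI[OF case_prodI2[OF bound]]]] by auto
  have "(\<Sum>m. a m N) = (\<Prod>j<N. 1 + q ^ (2 * j + 1))" for N
    unfolding a_def by (rule sums_unique[OF prod_odd_powers_sums, symmetric])
  moreover have "(\<lambda>N. \<Prod>j<N. 1 + q ^ (2 * j + 1)) \<longlonglongrightarrow> (\<Prod>j. 1 + q ^ (2 * j + 1))"
    using convergent_prod_LIMSEQ[OF convergent_prod_odd_powers[OF q]]
    by (intro LIMSEQ_imp_Suc[where f = "\<lambda>N. \<Prod>j<N. 1 + q ^ (2 * j + 1)"]) (simp add: lessThan_Suc_atMost)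
  ultimately have "(\<lambda>N. \<Sum>m. a m N) \<longlonglongrightarrow> (\<Prod>j. 1 + q ^ (2 * j + 1))" by simp
  then have "(\<Prod>j. 1 + q ^ (2 * j + 1)) = (\<Sum>m. of_nat (sc (int m)) * q ^ m)"
    using tendsto by (rule LIMSEQ_unique)
  then show ?thesis using summable_sums[OF summable_norm_cancel[OF summable]] by simp
qed

section \<open>The generating function of \<open>a_star\<close>\<close>

lemma sum_multiples:
  fixes g :: "nat \<Rightarrow> 'a::comm_monoid_add"
  assumes d: "0 < d" and vanish: "\<And>i. n < i \<Longrightarrow> g i = 0"
  shows "(\<Sum>j=1..n. g (d * j)) = (\<Sum>i\<le>n. if 0 < i \<and> d dvd i then g i else 0)"
proof -
  have "(\<Sum>j=1..n. g (d * j)) = (\<Sum>i\<in>(\<lambda>j. d * j) ` {1..n}. g i)"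
    using d by (simp add: sum.reindex inj_on_def)
  also have "\<dots> = (\<Sum>i\<in>{i \<in> {..n}. 0 < i \<and> d dvd i}. g i)"
  proof (rule sum.mono_neutral_right)
    show "{i \<in> {..n}. 0 < i \<and> d dvd i} \<subseteq> (\<lambda>j. d * j) ` {1..n}"
    proof
      fix i assume i: "i \<in> {i \<in> {..n}. 0 < i \<and> d dvd i}"
      then obtain j where ij: "i = d * j" by auto
      have "j \<le> d * j" using d by simp
      also have "d * j \<le> n" using i ij by simp
      finally have "j \<le> n" .
      then show "i \<in> (\<lambda>j. d * j) ` {1..n}" using i ij by (intro image_eqI[where x = j]) auto
    qed
    show "\<forall>i\<in>(\<lambda>j. d * j) ` {1..n} - {i \<in> {..n}. 0 < i \<and> d dvd i}. g i = 0"
    proof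
      fix i assume "i \<in> (\<lambda>j. d * j) ` {1..n} - {i \<in> {..n}. 0 < i \<and> d dvd i}"
      then have "n < i" using d by auto
      then show "g i = 0" by (rule vanish)
    qed
  qed simp
  also have "\<dots> = (\<Sum>i\<le>n. if 0 < i \<and> d dvd i then g i else 0)" by (rule sum.inter_filter) simp
  finally show ?thesis .
qed

lemma a_star_eq_convolution:
  assumes "even t" "0 < t" "1 \<le> n"
  shows "a_star t n = t * (\<Sum>i\<le>n. if 0 < i \<and> 2 * t dvd i then sc (int n - int i) else 0)"
proof -
  have "(\<Sum>j=1..n. sc (int n - 2 * int t * int j)) = (\<Sum>j=1..n. sc (int n - int (2 * t * j)))"
    by simp
  also have "\<dots> = (\<Sum>i\<le>n. if 0 < i \<and> 2 * t dvd i then sc (int n - int i) else 0)"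
    using sum_multiples[of "2 * t" n "\<lambda>i. sc (int n - int i)"] assms(2) by (simp add: sc_def)
  finally show ?thesis using a_star_eq_sum_sc[OF assms] by simp
qed

lemma multiples_power_sums:
  fixes q :: "'a::real_normed_field"
  assumes q: "norm q < 1" and d: "0 < d"
  shows "(\<lambda>i. (if 0 < i \<and> d dvd i then 1 else 0) * q ^ i) sums (q ^ d / (1 - q ^ d))"
proof -
  define f where "f i = (if 0 < i \<and> d dvd i then 1 else 0) * q ^ i" for i
  have "strict_mono (\<lambda>j. d * (j + 1))" using d by (intro strict_monoI) simp
  moreover have "f i = 0" if "i \<notin> range (\<lambda>j. d * (j + 1))" for i
  proof (rule ccontr)
    assume "f i \<noteq> 0"
    then obtain k where "0 < k" "i = d * k" unfolding f_def by (auto split: if_splits elim: dvdE)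
    then have "i = d * ((k - 1) + 1)" by simp
    then show False using that by blast
  qed
  moreover have "norm (q ^ d) < 1" using q d by (simp add: norm_power power_less_one_iff)
  then have "(\<lambda>j. q ^ d * (q ^ d) ^ j) sums (q ^ d / (1 - q ^ d))"
    using sums_mult[OF geometric_sums, of "q ^ d" "q ^ d"] by simp
  then have "(\<lambda>j. f (d * (j + 1))) sums (q ^ d / (1 - q ^ d))"
    unfolding f_def using d by (simp add: power_add power_mult[symmetric] mult.commute)
  ultimately show ?thesis unfolding f_def[symmetric] using sums_mono_reindex by blast
qed

lemma Cauchy_product_power_series_sums:
  fixes a b :: "nat \<Rightarrow> 'a::{real_normed_field,banach}"
  assumes "summable (\<lambda>n. norm (a n * q ^ n))" and "summable (\<lambda>n. norm (b n * q ^ n))"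
  shows "(\<lambda>n. (\<Sum>i\<le>n. a i * b (n - i)) * q ^ n) sums ((\<Sum>n. a n * q ^ n) * (\<Sum>n. b n * q ^ n))"
proof -
  have product_term: "a i * q ^ i * (b (n - i) * q ^ (n - i)) = a i * b (n - i) * q ^ n" if "i \<le> n" for i n
  proof -
    have "a i * q ^ i * (b (n - i) * q ^ (n - i)) = a i * b (n - i) * (q ^ i * q ^ (n - i))"
      by (simp add: mult_ac)
    also have "q ^ i * q ^ (n - i) = q ^ n" using that by (simp flip: power_add)
    finally show ?thesis .
  qed
  have "(\<Sum>i\<le>n. a i * q ^ i * (b (n - i) * q ^ (n - i))) = (\<Sum>i\<le>n. a i * b (n - i)) * q ^ n" for n
    unfolding sum_distrib_right by (rule sum.cong) (simp_all add: product_term)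
  then show ?thesis using Cauchy_product_sums[OF assms] by simp
qed

lemma a_star_sums:
  fixes q :: complex
  assumes t: "even t" "0 < t" and q: "norm q < 1"
  shows "(\<lambda>n. of_nat (a_star t (Suc n)) * q ^ Suc n) sums
           (of_nat t * (q ^ (2 * t) * (\<Prod>j. 1 + q ^ (2 * j + 1))) / (1 - q ^ (2 * t)))"
proof -
  define e where "e i = (if 0 < i \<and> 2 * t dvd i then 1 else 0 :: complex)" for i
  define s where "s m = (of_nat (sc (int m)) :: complex)" for m
  have E: "(\<lambda>i. e i * q ^ i) sums (q ^ (2 * t) / (1 - q ^ (2 * t)))"
    unfolding e_def using t by (intro multiples_power_sums[OF q]) simp
  have S: "(\<lambda>m. s m * q ^ m) sums (\<Prod>j. 1 + q ^ (2 * j + 1))" unfolding s_def by (rule sc_sums[OF q])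
  have "summable (\<lambda>i. norm (e i * q ^ i))"
    using q by (intro summable_comparison_test[OF _ summable_geometric[of "norm q"]])
      (auto simp: e_def norm_mult norm_power)
  moreover have "summable (\<lambda>m. norm (s m * q ^ m))"
    using summable_sc[of "norm q"] q by (simp add: s_def norm_mult norm_power)
  ultimately have "(\<lambda>n. (\<Sum>i\<le>n. e i * s (n - i)) * q ^ n) sums
      (q ^ (2 * t) / (1 - q ^ (2 * t)) * (\<Prod>j. 1 + q ^ (2 * j + 1)))"
    using Cauchy_product_power_series_sums unfolding sums_unique[OF E] sums_unique[OF S] by blast
  then have "(\<lambda>n. of_nat t * ((\<Sum>i\<le>n. e i * s (n - i)) * q ^ n)) sums
      (of_nat t * (q ^ (2 * t) / (1 - q ^ (2 * t)) * (\<Prod>j. 1 + q ^ (2 * j + 1))))"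
    by (rule sums_mult)
  then have "(\<lambda>n. of_nat t * ((\<Sum>i\<le>n. e i * s (n - i)) * q ^ n)) sums
      (of_nat t * (q ^ (2 * t) * (\<Prod>j. 1 + q ^ (2 * j + 1))) / (1 - q ^ (2 * t)))"
    by simp
  then have sums: "(\<lambda>n. of_nat t * ((\<Sum>i\<le>Suc n. e i * s (Suc n - i)) * q ^ Suc n)) sums
      (of_nat t * (q ^ (2 * t) * (\<Prod>j. 1 + q ^ (2 * j + 1))) / (1 - q ^ (2 * t)))"
    by (subst sums_Suc_iff) (simp add: e_def)
  have coeff: "(\<lambda>n. of_nat t * ((\<Sum>i\<le>Suc n. e i * s (Suc n - i)) * q ^ Suc n))
      = (\<lambda>n. of_nat (a_star t (Suc n)) * q ^ Suc n)"
  proof (rule ext)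
    fix n
    have "(\<Sum>i\<le>Suc n. e i * s (Suc n - i))
        = of_nat (\<Sum>i\<le>Suc n. if 0 < i \<and> 2 * t dvd i then sc (int (Suc n) - int i) else 0)"
      unfolding of_nat_sum by (intro sum.cong) (auto simp: e_def s_def of_nat_diff)
    then show "of_nat t * ((\<Sum>i\<le>Suc n. e i * s (Suc n - i)) * q ^ Suc n)
        = of_nat (a_star t (Suc n)) * q ^ Suc n"
      using a_star_eq_convolution[OF t, of "Suc n"] by simp
  qed
  show ?thesis using sums unfolding coeff .
qed

theorem theorem1p2:
  fixes t :: nat
  assumes "t > 0" and "even t"
  shows "(\<forall>q::complex. norm q < 1 \<longrightarrow>
           (\<lambda>n. of_nat (a_star t (Suc n)) * q ^ Suc n) sums
             (of_nat t * (q ^ (2 * t) * (\<Prod>j. 1 + q ^ (2 * j + 1))) / (1 - q ^ (2 * t)))) \<and>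
         (\<forall>n::nat. n \<ge> 1 \<longrightarrow>
           a_star t n = t * (\<Sum>j=1..n. sc (int n - 2 * int t * int j)) \<and>
           a_star t n = t * (\<Sum>j=1..n. q_star (int n - 2 * int t * int j)))"
proof (intro conjI allI impI)
  fix q :: complex assume "norm q < 1"
  then show "(\<lambda>n. of_nat (a_star t (Suc n)) * q ^ Suc n) sums
      (of_nat t * (q ^ (2 * t) * (\<Prod>j. 1 + q ^ (2 * j + 1))) / (1 - q ^ (2 * t)))"
    by (rule a_star_sums[OF assms(2,1)])
next
  fix n :: nat assume "n \<ge> 1"
  then show "a_star t n = t * (\<Sum>j=1..n. sc (int n - 2 * int t * int j))"
    by (rule a_star_eq_sum_sc[OF assms(2,1)])
  then show "a_star t n = t * (\<Sum>j=1..n. q_star (int n - 2 * int t * int j))"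
    by (simp add: q_star_eq_sc)
qed

end
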